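(* Let $\chi:U_1\to\mathbb{Z}/p^2\mathbb{Z}$ be a surjective continuous character of type $\langle l,m\rangle$. Then $\chi$ is strictly equivalent to a character whose standard expansion is $$x_l\,\mathfrak{Z}_l+\sum_{\substack{m-l\le j\le m\\ p\nmid j}} b_j\cdot p\,\mathfrak{Z}_j,$$ where $x_l,b_j\in\{0,1,\dots,p-1\}$, $x_l\neq 0$, and if $p\nmid m$ then $b_m\neq 0$. (A character of this form is called a reduced form of type $\langle l,m\rangle$.) In other words, every strict equivalence class of type $\langle l,m\rangle$ contains a reduced form.
   Context: Let $p$ be a prime, $K=\mathbb{F}_p((t))$, $U_1=1+t\mathbb{F}_p[[t]]$ the group of principal units, and $U_j=1+t^j\mathbb{F}_p[[t]]$ for $j\ge1$; $U_1$ carries the $t$-adic topology. The Nottingham group $\mathcal{N}$ over $\mathbb{F}_p$ is the set of power series $u(t)=t(1+c_1t+c_2t^2+\cdots)$ with $c_i\in\mathbb{F}_p$, a group under composition. A character is a continuous homomorphism $\chi:U_1\to\mathbb{Z}/p^2\mathbb{Z}$ (discrete topology on the target). $\mathcal{N}$ acts on characters by ${}_u\chi(f(t))=\chi(f(u(t)))$ for $f\in U_1$. Two characters $\chi,\psi$ are strictly equivalent, $\chi\simeq\psi$, if there is $u\in\mathcal{N}$ with $\psi={}_u\chi$ and $\chi(u(t)/t)=0$. A surjective character $\chi$ has type (break sequence) $\langle l,m\rangle$ where $l$ is the largest integer $b$ with $\chi(U_b)\not\subset p\mathbb{Z}/p^2\mathbb{Z}$ and $m$ is the largest integer $b$ with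 $\chi(U_b)\neq 0$. Put $E_j=1+t^j$. The elements $E_j$ with $p\nmid j$ form a topological $\mathbb{Z}_p$-basis of $U_1$; for $p\nmid j$, $\mathfrak{Z}_j$ denotes the character with $\mathfrak{Z}_j(E_i)=\delta_{ij}$ for all $i$ with $p\nmid i$. Every character of type $\langle l,m\rangle$ can be written uniquely in standard expansion $\chi=\sum_{1\le i\le l,\,p\nmid i}x_i\mathfrak{Z}_i+\sum_{1\le j\le m,\,p\nmid j}a_j\cdot p\,\mathfrak{Z}_j$ with $x_i,a_j\in\{0,\dots,p-1\}$; here $x_l\ne0$, and $a_m\neq0$ if $p\nmid m$. *)

theory Defs
  imports "HOL-Computational_Algebra.Formal_Power_Series"
begin

(* F_p is modelled by an arbitrary finite field type 'a with CARD('a) = p (p prime);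
   K = F_p((t)) is only needed through its power series ring 'a fps.
   Elements of Z/p^2Z are represented by the integers 0..p^2-1. *)

definition U1 :: "'a::field fps set" where
  "U1 = {f. fps_nth f 0 = 1}"

definition Uj :: "nat \<Rightarrow> 'a::field fps set" where
  "Uj j = {f. fps_nth f 0 = 1 \<and> (\<forall>i. 0 < i \<and> i < j \<longrightarrow> fps_nth f i = 0)}"

definition Ej :: "nat \<Rightarrow> 'a::field fps" where
  "Ej j = 1 + fps_X ^ j"

text \<open>Continuity w.r.t. the t-adic topology on U_1 and the discrete topology on the target
  means local constancy: each f has a t-adic neighbourhood (agreement of the first n
  coefficients) on which the character is constant.\<close>
definition is_character :: "nat \<Rightarrow> ('a::field fps \<Rightarrow> int) \<Rightarrow> bool" where
  "is_character p \<chi> \<longleftrightarrow>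
     (\<forall>f\<in>U1. \<chi> f \<in> {0..<int p ^ 2}) \<and>
     (\<forall>f\<in>U1. \<forall>g\<in>U1. \<chi> (f * g) = (\<chi> f + \<chi> g) mod (int p ^ 2)) \<and>
     (\<forall>f\<in>U1. \<exists>n. \<forall>g\<in>U1. (\<forall>i<n. fps_nth g i = fps_nth f i) \<longrightarrow> \<chi> g = \<chi> f)"

definition surjective_character :: "nat \<Rightarrow> ('a::field fps \<Rightarrow> int) \<Rightarrow> bool" where
  "surjective_character p \<chi> \<longleftrightarrow> is_character p \<chi> \<and> \<chi> ` U1 = {0..<int p ^ 2}"

definition Nottingham :: "'a::field fps set" where
  "Nottingham = {u. fps_nth u 0 = 0 \<and> fps_nth u 1 = 1}"

text \<open>Strict equivalence: psi = _u chi (on U_1) and chi(u(t)/t) = 0; u(t)/t = fps_shift 1 u.\<close>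
definition strictly_equiv :: "('a::field fps \<Rightarrow> int) \<Rightarrow> ('a fps \<Rightarrow> int) \<Rightarrow> bool" where
  "strictly_equiv \<chi> \<psi> \<longleftrightarrow>
     (\<exists>u\<in>Nottingham. (\<forall>f\<in>U1. \<psi> f = \<chi> (fps_compose f u)) \<and> \<chi> (fps_shift 1 u) = 0)"

definition has_type :: "nat \<Rightarrow> ('a::field fps \<Rightarrow> int) \<Rightarrow> nat \<Rightarrow> nat \<Rightarrow> bool" where
  "has_type p \<chi> l m \<longleftrightarrow>
     l \<ge> 1 \<and> (\<exists>f\<in>Uj l. \<not> int p dvd \<chi> f) \<and>
     (\<forall>b>l. \<forall>f\<in>Uj b. int p dvd \<chi> f) \<and>
     m \<ge> 1 \<and> (\<exists>f\<in>Uj m. \<chi> f \<noteq> 0) \<and>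
     (\<forall>b>m. \<forall>f\<in>Uj b. \<chi> f = 0)"

text \<open>Reduced form of type <l,m>: a character whose standard expansion is
  x_l Z_l + sum_{m-l<=j<=m, p not dvd j} b_j p Z_j. Since Z_j is the character with
  Z_j(E_i) = delta_ij (p not dvd i), and the E_i (p not dvd i) form a topological
  Z_p-basis of U_1, this says exactly that psi is a character with
  psi(E_i) = x_l [i=l] + p b_i [m-l<=i<=m] (mod p^2) for all i >= 1 with p not dvd i.\<close>
definition reduced_form :: "nat \<Rightarrow> nat \<Rightarrow> nat \<Rightarrow> ('a::field fps \<Rightarrow> int) \<Rightarrow> bool" where
  "reduced_form p l m \<psi> \<longleftrightarrow> is_character p \<psi> \<and>
     (\<exists>(xl::int) (b::nat \<Rightarrow> int).
        xl \<in> {1..<int p} \<and> (\<forall>j. b j \<in> {0..<int p}) \<and>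
        (\<not> p dvd m \<longrightarrow> b m \<noteq> 0) \<and>
        (\<forall>i. 1 \<le> i \<and> \<not> p dvd i \<longrightarrow>
           \<psi> (Ej i) = ((if i = l then xl else 0)
                       + int p * (if m - l \<le> i \<and> i \<le> m then b i else 0)) mod (int p ^ 2)))"

end

theory Submission
  imports Defs "HOL-Number_Theory.Residues"
begin

text \<open>
  Substituting \<open>t\<close> by \<open>t g\<close> with \<open>g \<equiv> E\<^sub>s\<^sup>c\<close> modulo \<open>t\<^sup>s\<^sup>+\<^sup>1\<close> changes the value of
  the character at \<open>E\<^sub>j\<close> by \<open>j c \<chi>(E\<^sub>j\<^sub>+\<^sub>s)\<close>, up to a value of \<open>\<chi>\<close> on \<open>U\<^sub>j\<^sub>+\<^sub>s\<^sub>+\<^sub>1\<close>.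
  The substitution is strict when \<open>\<chi>(g) = 0\<close>, which is arranged by multiplying \<open>g\<close>
  with a power of \<open>E\<^sub>l\<close> (on which \<open>\<chi>\<close> is a unit) or of \<open>E\<^sub>m\<close> (on which \<open>\<chi>\<close> is \<open>p\<close>
  times a unit). With \<open>s = l - i\<close> this clears the unit part of \<open>\<chi>(E\<^sub>i)\<close> for
  \<open>i = l - 1, \<dots>, 1\<close> in turn without disturbing the unit parts at larger indices;
  with \<open>s = m - i > l\<close> it then clears the \<open>p\<close>-part of \<open>\<chi>(E\<^sub>i)\<close> for
  \<open>i = m - l - 1, \<dots>, 1\<close>, changing no other value at an index \<open>\<ge> i\<close>. Above \<open>l\<close> all
  values are divisible by \<open>p\<close> and above \<open>m\<close> they vanish, so a reduced form remains.
\<close>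

unbundle fps_syntax

section \<open>Principal units\<close>

lemma U1_power: "f \<in> U1 \<Longrightarrow> f ^ n \<in> U1"
  by (induction n) (auto simp: U1_def)

lemma U1_compose: "f \<in> U1 \<Longrightarrow> f oo u \<in> U1"
  by (simp add: U1_def)

lemma Uj_subset_U1: "Uj k \<subseteq> U1"
  by (auto simp: Uj_def U1_def)

lemma Uj_antimono: "k \<le> k' \<Longrightarrow> Uj k' \<subseteq> Uj k"
  by (auto simp: Uj_def)

lemma Uj_iff:
  assumes "1 \<le> k"
  shows "f \<in> Uj k \<longleftrightarrow> (\<exists>q. f = 1 + fps_X ^ k * q)"
proof
  assume f: "f \<in> Uj k"
  have "f = 1 + fps_X ^ k * fps_shift k (f - 1)"
  proof (rule fps_ext)
    fix n
    show "f $ n = (1 + fps_X ^ k * fps_shift k (f - 1)) $ n"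
      using f assms by (cases "n = 0") (auto simp: Uj_def fps_X_power_mult_nth)
  qed
  then show "\<exists>q. f = 1 + fps_X ^ k * q" by blast
next
  assume "\<exists>q. f = 1 + fps_X ^ k * q"
  then show "f \<in> Uj k"
    using assms by (auto simp: Uj_def fps_X_power_mult_nth)
qed

lemma one_plus_X_power_mult_in_Uj: "1 \<le> k \<Longrightarrow> 1 + fps_X ^ k * q \<in> Uj k"
  using Uj_iff by blast

lemma Ej_in_Uj: "1 \<le> k \<Longrightarrow> Ej k \<in> Uj k"
  using one_plus_X_power_mult_in_Uj[of k 1] by (simp add: Ej_def)

lemma Ej_in_U1: "1 \<le> k \<Longrightarrow> Ej k \<in> U1"
  using Ej_in_Uj Uj_subset_U1 by blast

lemma Uj_mult:
  assumes "1 \<le> k" "f \<in> Uj k" "g \<in> Uj k"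
  shows "f * g \<in> Uj k"
proof -
  obtain q r where "f = 1 + fps_X ^ k * q" "g = 1 + fps_X ^ k * r"
    using assms Uj_iff by metis
  then have "f * g = 1 + fps_X ^ k * (q + r + fps_X ^ k * q * r)"
    by (simp add: algebra_simps)
  then show ?thesis
    using one_plus_X_power_mult_in_Uj[OF assms(1)] by simp
qed

lemma Uj_power: "1 \<le> k \<Longrightarrow> f \<in> Uj k \<Longrightarrow> f ^ n \<in> Uj k"
  by (induction n) (auto simp: Uj_mult, simp add: Uj_def)

lemma fps_X_mult_shift_1:
  fixes u :: "'a::comm_ring_1 fps"
  assumes "u $ 0 = 0"
  shows "fps_X * fps_shift 1 u = u"
proof (rule fps_ext)
  show "(fps_X * fps_shift 1 u) $ n = u $ n" for n
    using assms by (cases n) (simp_all add: fps_X_mult_nth)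
qed

lemma power_eq_X_power_mult_shift_1:
  fixes u :: "'a::comm_ring_1 fps"
  assumes "u $ 0 = 0"
  shows "u ^ k = fps_X ^ k * fps_shift 1 u ^ k"
proof -
  have "(fps_X * fps_shift 1 u) ^ k = fps_X ^ k * fps_shift 1 u ^ k"
    by (rule power_mult_distrib)
  then show ?thesis
    by (simp only: fps_X_mult_shift_1[OF assms])
qed

lemma Ej_compose: "v $ 0 = 0 \<Longrightarrow> Ej j oo v = 1 + v ^ j"
  by (simp add: Ej_def fps_compose_add_distrib fps_compose_power[symmetric])

lemma Uj_compose:
  assumes "1 \<le> k" "u $ 0 = 0" "f \<in> Uj k"
  shows "f oo u \<in> Uj k"
proof -
  obtain q where q: "f = 1 + fps_X ^ k * q"
    using assms Uj_iff by blast
  have "f oo u = 1 + u ^ k * (q oo u)"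
    using assms(2) by (simp add: q fps_compose_add_distrib fps_compose_mult_distrib
        fps_compose_power[symmetric])
  also have "\<dots> = 1 + fps_X ^ k * (fps_shift 1 u ^ k * (q oo u))"
    by (simp add: power_eq_X_power_mult_shift_1[OF assms(2)] mult.assoc)
  finally show ?thesis
    using one_plus_X_power_mult_in_Uj[OF assms(1)] by simp
qed

lemma power_one_plus_X_power_mult:
  fixes q :: "'a::comm_ring_1 fps"
  assumes "1 \<le> s"
  shows "\<exists>q'. (1 + fps_X ^ s * q) ^ j = 1 + fps_X ^ s * q' \<and> q' $ 0 = of_nat j * q $ 0"
proof (induction j)
  case 0
  show ?case by (intro exI[of _ 0]) simp
next
  case (Suc j)
  then obtain r where r: "(1 + fps_X ^ s * q) ^ j = 1 + fps_X ^ s * r" "r $ 0 = of_nat j * q $ 0"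
    by blast
  have "(1 + fps_X ^ s * q) ^ Suc j = (1 + fps_X ^ s * r) * (1 + fps_X ^ s * q)"
    by (simp only: power_Suc2 r(1))
  also have "\<dots> = 1 + fps_X ^ s * (r + q + fps_X ^ s * (r * q))"
    by (simp add: algebra_simps)
  finally have "(1 + fps_X ^ s * q) ^ Suc j = 1 + fps_X ^ s * (r + q + fps_X ^ s * (r * q))" .
  moreover have "(r + q + fps_X ^ s * (r * q)) $ 0 = of_nat (Suc j) * q $ 0"
    using r(2) assms by (simp add: fps_X_power_mult_nth algebra_simps)
  ultimately show ?case by blast
qed

lemma Ej_power_mult_Uj:
  fixes h :: "'a::field fps"
  assumes "1 \<le> s" "h \<in> Uj (s + 1)"
  shows "\<exists>q. Ej s ^ c * h = 1 + fps_X ^ s * q \<and> q $ 0 = of_nat c"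
proof -
  obtain q1 where q1: "(Ej s :: 'a fps) ^ c = 1 + fps_X ^ s * q1" "q1 $ 0 = of_nat c"
    using power_one_plus_X_power_mult[OF assms(1), of 1 c] by (auto simp: Ej_def)
  obtain q2 where q2: "h = 1 + fps_X ^ (s + 1) * q2"
    using assms(2) Uj_iff by (metis le_add2)
  have "Ej s ^ c * h = 1 + fps_X ^ s * (q1 + fps_X * q2 + fps_X ^ (s + 1) * (q1 * q2))"
    by (simp add: q1(1) q2 algebra_simps)
  moreover have "(q1 + fps_X * q2 + fps_X ^ (s + 1) * (q1 * q2)) $ 0 = of_nat c"
    using q1(2) by (simp add: fps_X_power_mult_nth)
  ultimately show ?thesis by blast
qed

section \<open>Finite prime fields\<close>

lemma CHAR_eq_card_prime:
  assumes "prime p" "card (UNIV :: 'a::{field,finite} set) = p"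
  shows "CHAR('a) = p"
proof -
  have "prime CHAR('a)"
    by (intro prime_CHAR_semidom finite_imp_CHAR_pos) simp
  moreover have "CHAR('a) dvd p"
    using CHAR_dvd_CARD assms(2) by metis
  ultimately show ?thesis
    using assms(1) primes_dvd_imp_eq by blast
qed

lemma of_nat_surj_card_prime:
  assumes "prime p" "card (UNIV :: 'a::{field,finite} set) = p"
  shows "\<exists>a. (x::'a) = of_nat a"
proof -
  have "inj_on (of_nat :: nat \<Rightarrow> 'a) {..<p}"
    using CHAR_eq_card_prime[OF assms]
    by (intro inj_onI) (auto simp: of_nat_eq_iff_cong_CHAR cong_def)
  then have "card ((of_nat :: nat \<Rightarrow> 'a) ` {..<p}) = card (UNIV :: 'a set)"
    using assms(2) by (simp add: card_image)
  then have "(of_nat :: nat \<Rightarrow> 'a) ` {..<p} = UNIV"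
    by (intro card_subset_eq) auto
  then show ?thesis by blast
qed

lemma Ej_power_card_prime:
  assumes "prime p" "card (UNIV :: 'a::{field,finite} set) = p"
  shows "(Ej l :: 'a fps) ^ p = Ej (p * l)"
proof -
  have "CHAR('a fps) = p"
    using CHAR_eq_card_prime[OF assms] by simp
  then have "(1 + fps_X ^ l :: 'a fps) ^ p = 1 ^ p + (fps_X ^ l) ^ p"
    using assms(1) by (intro freshmans_dream) auto
  then show ?thesis
    by (simp add: Ej_def power_mult[symmetric] mult.commute)
qed

section \<open>Arithmetic modulo \<open>p\<^sup>2\<close>\<close>

lemma prime_linear_cong_solvable:
  fixes p a b :: int
  assumes "prime p" "\<not> p dvd a"
  shows "\<exists>n::nat. [int n * a + b = 0] (mod p ^ k)"
proof -
  have "coprime a p"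
    using assms prime_imp_coprime coprime_commute by blast
  then have "coprime a (p ^ k)"
    by simp
  then obtain x where x: "[a * x = 1] (mod p ^ k)"
    using cong_solve_coprime_int by blast
  define n where "n = nat ((- b * x) mod p ^ k)"
  have "int n = (- b * x) mod p ^ k"
    using assms(1) by (simp add: n_def prime_gt_0_int)
  then have "[int n * a + b = (- b * x) * a + b] (mod p ^ k)"
    by (intro cong_add cong_mult cong_refl) (simp add: cong_def)
  also have "(- b * x) * a + b = - b * (a * x) + b"
    by (simp add: algebra_simps)
  also have "[\<dots> = - b * 1 + b] (mod p ^ k)"
    by (intro cong_add cong_mult cong_refl x)
  finally show ?thesis by auto
qed

lemma mod_power2_add_dvd_cong:
  fixes a b p :: int
  assumes "p dvd b"
  shows "[(a + b) mod p ^ 2 = a] (mod p)"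
proof -
  have "[(a + b) mod p ^ 2 = a + b] (mod p)"
    by (simp add: cong_def mod_mod_cancel)
  also have "[a + b = a + 0] (mod p)"
    using assms by (intro cong_add cong_refl) (simp add: cong_0_iff)
  finally show ?thesis
    by simp
qed

lemma cong_add_mult_dvd:
  fixes a b c p :: int
  assumes "p dvd b"
  shows "[a + c * b = a] (mod p)"
proof -
  have "[c * b = 0] (mod p)"
    using assms by (simp add: cong_0_iff)
  from cong_add[OF cong_refl[of a] this] show ?thesis
    by simp
qed

lemma mod_power2_add_mult_eq_mod:
  fixes v e p :: int
  assumes "0 < p" "[e + v div p = 0] (mod p)"
  shows "(v + p * e) mod p ^ 2 = v mod p"
proof -
  obtain k where k: "e + v div p = p * k"
    using assms(2) by (auto simp: cong_0_iff)
  have "v + p * e = v mod p + p * (e + v div p)"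
    using div_mult_mod_eq[of v p] by (simp add: algebra_simps)
  also have "\<dots> = v mod p + p ^ 2 * k"
    by (simp add: k power2_eq_square)
  finally have "(v + p * e) mod p ^ 2 = v mod p mod p ^ 2"
    by simp
  also have "\<dots> = v mod p"
  proof (rule mod_pos_pos_trivial)
    have "v mod p < p"
      using assms(1) by simp
    also have "p \<le> p ^ 2"
      using assms(1) by (intro self_le_power) simp_all
    finally show "v mod p < p ^ 2" .
  qed (use assms(1) in simp)
  finally show ?thesis .
qed

lemma two_digit_expansion:
  fixes v p :: int
  assumes "0 < p" "0 \<le> v" "v < p ^ 2"
  shows "p * (v div p mod p) + v mod p = v"
proof -
  have "v mod (p * p) = p * (v div p mod p) + v mod p"
    using assms(1) by (simp add: zmod_zmult2_eq)
  moreover have "v mod (p * p) = v"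
    using assms by (simp add: power2_eq_square)
  ultimately show ?thesis
    by simp
qed

section \<open>Homomorphisms on the principal units\<close>

definition U1_hom :: "nat \<Rightarrow> ('a::field fps \<Rightarrow> int) \<Rightarrow> bool" where
  "U1_hom p \<psi> \<longleftrightarrow> (\<forall>f\<in>U1. \<psi> f \<in> {0..<int p ^ 2}) \<and>
     (\<forall>f\<in>U1. \<forall>g\<in>U1. \<psi> (f * g) = (\<psi> f + \<psi> g) mod int p ^ 2)"

lemma U1_hom_range: "U1_hom p \<psi> \<Longrightarrow> f \<in> U1 \<Longrightarrow> 0 \<le> \<psi> f \<and> \<psi> f < int p ^ 2"
  by (auto simp: U1_hom_def)

lemma U1_hom_mult:
  "U1_hom p \<psi> \<Longrightarrow> f \<in> U1 \<Longrightarrow> g \<in> U1 \<Longrightarrow> \<psi> (f * g) = (\<psi> f + \<psi> g) mod int p ^ 2"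
  by (auto simp: U1_hom_def)

lemma U1_hom_one:
  assumes "U1_hom p \<psi>"
  shows "\<psi> 1 = 0"
proof -
  have "1 \<in> U1" by (simp add: U1_def)
  then have range: "0 \<le> \<psi> 1" "\<psi> 1 < int p ^ 2"
    and "\<psi> 1 = (\<psi> 1 + \<psi> 1) mod int p ^ 2"
    using U1_hom_range[OF assms] U1_hom_mult[OF assms] by (metis mult_1)+
  then have "int p ^ 2 dvd \<psi> 1"
    by (metis add_diff_cancel_left' mod_eq_dvd_iff mod_pos_pos_trivial)
  then show ?thesis
    using range zdvd_not_zless[of "\<psi> 1"] by (cases "\<psi> 1 > 0") auto
qed

lemma U1_hom_power:
  assumes "U1_hom p \<psi>" "f \<in> U1"
  shows "\<psi> (f ^ n) = int n * \<psi> f mod int p ^ 2"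
proof (induction n)
  case 0
  show ?case using U1_hom_one[OF assms(1)] by simp
next
  case (Suc n)
  have "\<psi> (f ^ Suc n) = (\<psi> f + \<psi> (f ^ n)) mod int p ^ 2"
    using U1_hom_mult[OF assms(1,2) U1_power[OF assms(2)]] by simp
  also have "\<dots> = int (Suc n) * \<psi> f mod int p ^ 2"
    unfolding Suc by (simp add: mod_add_right_eq algebra_simps)
  finally show ?case .
qed

lemma U1_hom_compose: "U1_hom p \<chi> \<Longrightarrow> u $ 0 = 0 \<Longrightarrow> U1_hom p (\<lambda>f. \<chi> (f oo u))"
  by (auto simp: U1_hom_def fps_compose_mult_distrib U1_compose)

lemma is_character_imp_U1_hom: "is_character p \<chi> \<Longrightarrow> U1_hom p \<chi>"
  by (simp add: is_character_def U1_hom_def)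

lemma is_character_compose:
  assumes \<chi>: "is_character p \<chi>" and u0: "u $ 0 = 0"
  shows "is_character p (\<lambda>f. \<chi> (f oo u))"
proof -
  have "\<exists>n. \<forall>g\<in>U1. (\<forall>i<n. g $ i = f $ i) \<longrightarrow> \<chi> (g oo u) = \<chi> (f oo u)" if f: "f \<in> U1" for f
  proof -
    obtain n where n: "\<forall>g\<in>U1. (\<forall>i<n. g $ i = (f oo u) $ i) \<longrightarrow> \<chi> g = \<chi> (f oo u)"
      using \<chi> U1_compose[OF f] unfolding is_character_def by blast
    have "\<chi> (g oo u) = \<chi> (f oo u)" if g: "g \<in> U1" "\<forall>i<n. g $ i = f $ i" for g
    proof -
      have "(g oo u) $ i = (f oo u) $ i" if "i < n" for i
        unfolding fps_compose_nth using g(2) that by (intro sum.cong) auto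
      then show ?thesis
        using n U1_compose[OF g(1)] by blast
    qed
    then show ?thesis
      by blast
  qed
  then show ?thesis
    using U1_hom_compose[OF is_character_imp_U1_hom[OF \<chi>] u0]
    unfolding is_character_def U1_hom_def by blast
qed

lemma U1_hom_add_X_power_mult:
  assumes "U1_hom p \<psi>" "g \<in> U1" "1 \<le> k"
  shows "\<psi> (g + fps_X ^ k * q) = (\<psi> g + \<psi> (1 + fps_X ^ k * (q * inverse g))) mod int p ^ 2"
proof -
  have "g * inverse g = 1"
    using assms(2) by (intro inverse_mult_eq_1') (simp add: U1_def)
  then have "g + fps_X ^ k * q = g * (1 + fps_X ^ k * (q * inverse g))"
    by (simp add: algebra_simps)
  then show ?thesis
    using U1_hom_mult[OF assms(1,2)] one_plus_X_power_mult_in_Uj[OF assms(3)] Uj_subset_U1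
    by auto
qed

lemma U1_hom_leading_term:
  fixes q :: "'a::field fps"
  assumes "U1_hom p \<psi>" "1 \<le> k" "q $ 0 = of_nat a"
  shows "\<exists>h\<in>Uj (k + 1). \<psi> (1 + fps_X ^ k * q) = (int a * \<psi> (Ej k) + \<psi> h) mod int p ^ 2"
proof -
  obtain q1 where q1: "(Ej k :: 'a fps) ^ a = 1 + fps_X ^ k * q1" "q1 $ 0 = of_nat a"
    using power_one_plus_X_power_mult[OF assms(2), of 1 a] by (auto simp: Ej_def)
  define r where "r = fps_shift 1 (q - q1)"
  have "fps_X * r = q - q1"
    unfolding r_def using assms(3) q1(2) by (intro fps_X_mult_shift_1) simp
  then have "q = q1 + fps_X * r"
    by simp
  then have "1 + fps_X ^ k * q = Ej k ^ a + fps_X ^ (k + 1) * r"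
    by (simp add: q1(1) algebra_simps)
  moreover have E: "Ej k ^ a \<in> U1"
    using U1_power Ej_in_U1 assms(2) by blast
  ultimately have "\<psi> (1 + fps_X ^ k * q) =
      (\<psi> (Ej k ^ a) + \<psi> (1 + fps_X ^ (k + 1) * (r * inverse (Ej k ^ a)))) mod int p ^ 2"
    using U1_hom_add_X_power_mult[OF assms(1) E, of "k + 1" r] by simp
  also have "\<dots> = (int a * \<psi> (Ej k) + \<psi> (1 + fps_X ^ (k + 1) * (r * inverse (Ej k ^ a)))) mod int p ^ 2"
    using U1_hom_power[OF assms(1) Ej_in_U1[OF assms(2)]] by (simp add: mod_add_left_eq)
  finally show ?thesis
    using one_plus_X_power_mult_in_Uj[of "k + 1"] by auto
qed

lemma U1_hom_Ej_compose_Nottingham: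
  assumes "U1_hom p \<psi>" "u \<in> Nottingham" "1 \<le> k"
  shows "\<exists>h\<in>Uj (k + 1). \<psi> (Ej k oo u) = (\<psi> (Ej k) + \<psi> h) mod int p ^ 2"
proof -
  have u0: "u $ 0 = 0" and u1: "fps_shift 1 u $ 0 = 1"
    using assms(2) by (auto simp: Nottingham_def)
  have "Ej k oo u = 1 + fps_X ^ k * fps_shift 1 u ^ k"
    by (simp add: Ej_compose[OF u0] power_eq_X_power_mult_shift_1[OF u0])
  moreover have "(fps_shift 1 u ^ k) $ 0 = of_nat 1"
    using u1 by (simp add: fps_nth_power_0)
  ultimately show ?thesis
    using U1_hom_leading_term[OF assms(1,3)] by fastforce
qed

lemma U1_hom_Ej_compose_X_mult:
  assumes "U1_hom p \<psi>" "1 \<le> s" "1 \<le> j" "q $ 0 = of_nat c"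
  shows "\<exists>h\<in>Uj (j + s + 1). \<psi> (Ej j oo (fps_X * (1 + fps_X ^ s * q))) =
           (\<psi> (Ej j) + int (j * c) * \<psi> (Ej (j + s)) + \<psi> h) mod int p ^ 2"
proof -
  obtain qj where qj: "(1 + fps_X ^ s * q) ^ j = 1 + fps_X ^ s * qj" "qj $ 0 = of_nat j * of_nat c"
    using power_one_plus_X_power_mult[OF assms(2), of q j] assms(4) by auto
  have "Ej j oo (fps_X * (1 + fps_X ^ s * q)) = 1 + (fps_X * (1 + fps_X ^ s * q)) ^ j"
    by (rule Ej_compose) simp
  also have "\<dots> = Ej j + fps_X ^ (j + s) * qj"
    by (simp only: power_mult_distrib qj(1)) (simp add: Ej_def algebra_simps power_add)
  finally have eq: "\<psi> (Ej j oo (fps_X * (1 + fps_X ^ s * q))) =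
      (\<psi> (Ej j) + \<psi> (1 + fps_X ^ (j + s) * (qj * inverse (Ej j)))) mod int p ^ 2"
    using U1_hom_add_X_power_mult[OF assms(1) Ej_in_U1[OF assms(3)]] assms(3) by simp
  have "1 \<le> j + s" "(qj * inverse (Ej j)) $ 0 = of_nat (j * c)"
    using qj(2) assms(3) by (simp_all add: Ej_def)
  from U1_hom_leading_term[OF assms(1) this] obtain h where "h \<in> Uj (j + s + 1)"
    "\<psi> (1 + fps_X ^ (j + s) * (qj * inverse (Ej j))) =
       (int (j * c) * \<psi> (Ej (j + s)) + \<psi> h) mod int p ^ 2"
    by blast
  with eq show ?thesis
    by (auto simp: mod_add_right_eq add.assoc)
qed

lemma U1_hom_Ej_power_mult_compose_eq_0:
  assumes \<chi>: "U1_hom p \<chi>" and u0: "u $ 0 = 0" and "1 \<le> s" "1 \<le> k"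
    and compensated: "[int n * \<chi> (Ej k oo u) + \<chi> (Ej s ^ c oo u) = 0] (mod int p ^ 2)"
  shows "\<chi> ((Ej s ^ c * Ej k ^ n) oo u) = 0"
proof -
  have "\<chi> ((Ej s ^ c * Ej k ^ n) oo u) = (\<chi> (Ej s ^ c oo u) + \<chi> (Ej k ^ n oo u)) mod int p ^ 2"
    using U1_hom_mult[OF U1_hom_compose[OF \<chi> u0]
        U1_power[OF Ej_in_U1[OF assms(3)]] U1_power[OF Ej_in_U1[OF assms(4)]]] by simp
  also have "\<chi> (Ej k ^ n oo u) = int n * \<chi> (Ej k oo u) mod int p ^ 2"
    using U1_hom_power[OF U1_hom_compose[OF \<chi> u0] Ej_in_U1[OF assms(4)]] by simp
  finally show ?thesis
    using compensated by (simp add: cong_def mod_add_right_eq add.commute)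
qed

section \<open>Strict substitutions\<close>

definition strict_substitution :: "('a::field fps \<Rightarrow> int) \<Rightarrow> 'a fps \<Rightarrow> bool" where
  "strict_substitution \<chi> u \<longleftrightarrow> u \<in> Nottingham \<and> \<chi> (fps_shift 1 u) = 0"

lemma strict_substitution_X: "U1_hom p \<chi> \<Longrightarrow> strict_substitution \<chi> fps_X"
  using fps_shift_times_fps_X'[of 1]
  by (simp add: strict_substitution_def Nottingham_def U1_hom_one)

lemma strict_substitution_X_mult:
  assumes \<chi>: "U1_hom p \<chi>" and u: "strict_substitution \<chi> u"
    and g: "g \<in> U1" "\<chi> (g oo u) = 0"
  shows "strict_substitution \<chi> ((fps_X * g) oo u)"
proof -
  have u0: "u $ 0 = 0" and u1: "u $ 1 = 1" and us: "\<chi> (fps_shift 1 u) = 0"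
    using u by (auto simp: strict_substitution_def Nottingham_def)
  have "(fps_X * g) oo u = u * (g oo u)"
    using u0 by (simp add: fps_compose_mult_distrib)
  also have "\<dots> = fps_shift 1 u * (g oo u) * fps_X"
    by (subst (1) fps_X_mult_shift_1[OF u0, symmetric]) (simp add: mult_ac)
  finally have "(fps_X * g) oo u = fps_shift 1 u * (g oo u) * fps_X" .
  then have "fps_shift 1 ((fps_X * g) oo u) = fps_shift 1 u * (g oo u)"
    by (metis fps_shift_times_fps_X')
  moreover have "fps_shift 1 u \<in> U1"
    using u1 by (simp add: U1_def)
  ultimately have "\<chi> (fps_shift 1 ((fps_X * g) oo u)) = 0"
    using U1_hom_mult[OF \<chi> _ U1_compose[OF g(1)]] us g(2) by simp
  moreover have "((fps_X * g) oo u) \<in> Nottingham"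
    using u0 u1 g(1) by (simp add: Nottingham_def fps_compose_nth U1_def)
  ultimately show ?thesis
    by (simp add: strict_substitution_def)
qed

lemma strictly_equiv_compose:
  "strict_substitution \<chi> u \<Longrightarrow> strictly_equiv \<chi> (\<lambda>f. \<chi> (f oo u))"
  by (auto simp: strictly_equiv_def strict_substitution_def)

lemma strict_substitution_step:
  fixes \<chi> :: "'a::field fps \<Rightarrow> int"
  assumes \<chi>: "U1_hom p \<chi>" and u: "strict_substitution \<chi> u" and s: "1 \<le> s" "s < k"
    and compensated: "[int n * \<chi> (Ej k oo u) + \<chi> (Ej s ^ c oo u) = 0] (mod int p ^ 2)"
  obtains u' where "strict_substitution \<chi> u'"
    and "\<And>j. 1 \<le> j \<Longrightarrow> \<exists>H\<in>Uj (j + s + 1). \<chi> (Ej j oo u') =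
           (\<chi> (Ej j oo u) + int (j * c) * \<chi> (Ej (j + s) oo u) + \<chi> (H oo u)) mod int p ^ 2"
proof -
  have u0: "u $ 0 = 0"
    using u by (simp add: strict_substitution_def Nottingham_def)
  have "(Ej k :: 'a fps) ^ n \<in> Uj (s + 1)"
    using Uj_power[of "s + 1" "Ej k" n] Uj_antimono[of "s + 1" k] Ej_in_Uj[of k] s by auto
  then obtain q where q: "(Ej s :: 'a fps) ^ c * Ej k ^ n = 1 + fps_X ^ s * q" "q $ 0 = of_nat c"
    using Ej_power_mult_Uj[OF s(1)] by blast
  define g where "g = 1 + fps_X ^ s * q"
  have "\<chi> (g oo u) = 0"
    using U1_hom_Ej_power_mult_compose_eq_0[OF \<chi> u0 s(1) _ compensated] s q(1)
    unfolding g_def by simp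
  then have "strict_substitution \<chi> ((fps_X * g) oo u)"
    using strict_substitution_X_mult[OF \<chi> u] one_plus_X_power_mult_in_Uj[OF s(1)] Uj_subset_U1
    unfolding g_def by auto
  moreover have "\<exists>H\<in>Uj (j + s + 1). \<chi> (Ej j oo ((fps_X * g) oo u)) =
      (\<chi> (Ej j oo u) + int (j * c) * \<chi> (Ej (j + s) oo u) + \<chi> (H oo u)) mod int p ^ 2"
    if "1 \<le> j" for j
  proof -
    have "Ej j oo ((fps_X * g) oo u) = (Ej j oo (fps_X * g)) oo u"
      using u0 by (simp add: fps_compose_assoc)
    then show ?thesis
      using U1_hom_Ej_compose_X_mult[OF U1_hom_compose[OF \<chi> u0] s(1) that q(2)]
      unfolding g_def by simp
  qed
  ultimately show ?thesis
    using that by blast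
qed

section \<open>The break sequence of a character\<close>

lemma U1_hom_Uj_leading_term:
  assumes "prime p" "card (UNIV :: 'a::{field,finite} set) = p"
    and "U1_hom p \<psi>" "1 \<le> k" "(f :: 'a fps) \<in> Uj k"
  shows "\<exists>a. \<exists>h\<in>Uj (k + 1). \<psi> f = (int a * \<psi> (Ej k) + \<psi> h) mod int p ^ 2"
proof -
  obtain q where q: "f = 1 + fps_X ^ k * q"
    using assms(4,5) Uj_iff by blast
  obtain a where "q $ 0 = of_nat a"
    using of_nat_surj_card_prime[OF assms(1,2)] by blast
  then show ?thesis
    using U1_hom_leading_term[OF assms(3,4)] q by blast
qed

lemma has_type_Ej_l_not_dvd:
  assumes "prime p" "card (UNIV :: 'a::{field,finite} set) = p"
    and \<chi>: "U1_hom p \<chi>" and type: "has_type p (\<chi> :: 'a fps \<Rightarrow> int) l m"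
  shows "\<not> int p dvd \<chi> (Ej l)"
proof
  assume dvd: "int p dvd \<chi> (Ej l)"
  obtain f where f: "f \<in> Uj l" "\<not> int p dvd \<chi> f" and l: "1 \<le> l"
    using type by (auto simp: has_type_def)
  obtain a h where h: "h \<in> Uj (l + 1)" "\<chi> f = (int a * \<chi> (Ej l) + \<chi> h) mod int p ^ 2"
    using U1_hom_Uj_leading_term[OF assms(1,2) \<chi> l f(1)] by blast
  have "int p dvd \<chi> h"
    using type h(1) by (auto simp: has_type_def)
  then have "int p dvd \<chi> f"
    using dvd h(2) by (simp add: dvd_mod_iff power2_eq_square)
  with f(2) show False ..
qed

lemma has_type_Ej_m_nonzero:
  assumes "prime p" "card (UNIV :: 'a::{field,finite} set) = p"
    and \<chi>: "U1_hom p \<chi>" and type: "has_type p (\<chi> :: 'a fps \<Rightarrow> int) l m"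
  shows "\<chi> (Ej m) \<noteq> 0"
proof
  assume zero: "\<chi> (Ej m) = 0"
  obtain f where f: "f \<in> Uj m" "\<chi> f \<noteq> 0" and m: "1 \<le> m"
    using type by (auto simp: has_type_def)
  obtain a h where h: "h \<in> Uj (m + 1)" "\<chi> f = (int a * \<chi> (Ej m) + \<chi> h) mod int p ^ 2"
    using U1_hom_Uj_leading_term[OF assms(1,2) \<chi> m f(1)] by blast
  have "\<chi> h = 0"
    using type h(1) by (auto simp: has_type_def)
  with f(2) h(2) zero show False by simp
qed

lemma has_type_l_less_m:
  assumes "prime p" "card (UNIV :: 'a::{field,finite} set) = p"
    and \<chi>: "U1_hom p \<chi>" and type: "has_type p (\<chi> :: 'a fps \<Rightarrow> int) l m"
  shows "l < m"
proof -
  have l: "1 \<le> l" and above_m: "\<And>k f. m < k \<Longrightarrow> f \<in> Uj k \<Longrightarrow> \<chi> f = 0"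
    using type by (auto simp: has_type_def)
  have "l \<le> m"
  proof (rule ccontr)
    assume "\<not> l \<le> m"
    moreover obtain f where "f \<in> Uj l" "\<not> int p dvd \<chi> f"
      using type by (auto simp: has_type_def)
    ultimately show False
      using above_m[of l f] by simp
  qed
  moreover have "l \<noteq> m"
  proof
    assume "l = m"
    have "2 * l \<le> p * l"
      using prime_ge_2_nat[OF assms(1)] by (rule mult_le_mono1)
    then have pl: "m < p * l"
      using \<open>l = m\<close> l by linarith
    then have "Ej (p * l) \<in> Uj (p * l)"
      by (intro Ej_in_Uj) linarith
    then have "\<chi> (Ej l ^ p) = 0"
      using above_m[OF pl] Ej_power_card_prime[OF assms(1,2)] by simp
    moreover have "\<chi> (Ej l ^ p) = int p * \<chi> (Ej l) mod int p ^ 2"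
      using U1_hom_power[OF \<chi> Ej_in_U1[OF l]] by simp
    ultimately have "int p * int p dvd int p * \<chi> (Ej l)"
      by (simp add: dvd_eq_mod_eq_0 power2_eq_square)
    then have "int p dvd \<chi> (Ej l)"
      using assms(1) by (simp add: prime_gt_0_nat)
    then show False
      using has_type_Ej_l_not_dvd[OF assms] by contradiction
  qed
  ultimately show ?thesis by simp
qed

section \<open>Reduction of a character of type \<open>\<langle>l, m\<rangle>\<close>\<close>

lemma exists_descending_adjustment:
  fixes a b :: nat
  assumes "P x\<^sub>0"
    and step: "\<And>x i. P x \<Longrightarrow> a \<le> i \<Longrightarrow> i < b \<Longrightarrow>
                 \<exists>y. P y \<and> Q y i \<and> (\<forall>j. i < j \<and> j < b \<and> Q x j \<longrightarrow> Q y j)"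
  shows "\<exists>x. P x \<and> (\<forall>j. a \<le> j \<and> j < b \<longrightarrow> Q x j)"
proof (cases "a \<le> b")
  case True
  then show ?thesis
  proof (induction a rule: inc_induct)
    case base
    show ?case using assms(1) by auto
  next
    case (step i)
    then obtain x where x: "P x" "\<forall>j. Suc i \<le> j \<and> j < b \<longrightarrow> Q x j"
      by blast
    obtain y where y: "P y" "Q y i" "\<forall>j. i < j \<and> j < b \<and> Q x j \<longrightarrow> Q y j"
      using assms(2)[OF x(1)] step.hyps by blast
    have "Q y j" if "i \<le> j" "j < b" for j
      using that x(2) y(2,3) by (cases "j = i") auto
    with y(1) show ?case
      by blast
  qed
qed (use assms(1) in auto)

text \<open>
  For \<open>p \<nmid> j\<close> the value \<open>\<chi>(E\<^sub>j)\<close> is \<open>x\<^sub>j + p a\<^sub>j\<close> in terms of the standard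
  expansion; below, \<open>x\<^sub>j\<close> is called the unit coefficient and \<open>a\<^sub>j\<close> the \<open>p\<close>-coefficient.
\<close>

locale character_of_type =
  fixes p :: nat and \<chi> :: "'a::field fps \<Rightarrow> int" and l m :: nat
  assumes prime: "prime p" and character: "is_character p \<chi>"
    and l_pos: "1 \<le> l" and l_less_m: "l < m"
    and dvd_above_l: "\<And>k f. l < k \<Longrightarrow> f \<in> Uj k \<Longrightarrow> int p dvd \<chi> f"
    and zero_above_m: "\<And>k f. m < k \<Longrightarrow> f \<in> Uj k \<Longrightarrow> \<chi> f = 0"
    and Ej_l_not_dvd: "\<not> int p dvd \<chi> (Ej l)"
    and Ej_m_nonzero: "\<chi> (Ej m) \<noteq> 0"
begin

lemma character_hom: "U1_hom p \<chi>"
  using character by (rule is_character_imp_U1_hom)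

lemma p_pos: "0 < int p"
  using prime by (simp add: prime_gt_0_nat)

lemma dvd_above_l_compose:
  assumes "u $ 0 = 0" "l < k" "f \<in> Uj k"
  shows "int p dvd \<chi> (f oo u)"
  using dvd_above_l[OF assms(2) Uj_compose[OF _ assms(1,3)]] assms(2) by simp

lemma zero_above_m_compose:
  assumes "u $ 0 = 0" "m < k" "f \<in> Uj k"
  shows "\<chi> (f oo u) = 0"
  using zero_above_m[OF assms(2) Uj_compose[OF _ assms(1,3)]] assms(2) by simp

lemma Ej_compose_range: "1 \<le> j \<Longrightarrow> 0 \<le> \<chi> (Ej j oo u) \<and> \<chi> (Ej j oo u) < int p ^ 2"
  using U1_hom_range[OF character_hom U1_compose[OF Ej_in_U1]] by blast

lemma Ej_l_compose_not_dvd: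
  assumes "u \<in> Nottingham"
  shows "\<not> int p dvd \<chi> (Ej l oo u)"
proof
  assume dvd: "int p dvd \<chi> (Ej l oo u)"
  obtain h where h: "h \<in> Uj (l + 1)" "\<chi> (Ej l oo u) = (\<chi> (Ej l) + \<chi> h) mod int p ^ 2"
    using U1_hom_Ej_compose_Nottingham[OF character_hom assms l_pos] by blast
  have "int p dvd \<chi> h"
    using dvd_above_l[OF _ h(1)] by simp
  then have "int p dvd \<chi> (Ej l)"
    using dvd h(2) by (simp add: dvd_mod_iff power2_eq_square dvd_add_left_iff)
  with Ej_l_not_dvd show False ..
qed

lemma Ej_m_compose_p_times_unit:
  assumes "u \<in> Nottingham"
  obtains z where "\<chi> (Ej m oo u) = int p * z" "\<not> int p dvd z"
proof -
  have m: "1 \<le> m"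
    using l_pos l_less_m by simp
  obtain h where h: "h \<in> Uj (m + 1)" "\<chi> (Ej m oo u) = (\<chi> (Ej m) + \<chi> h) mod int p ^ 2"
    using U1_hom_Ej_compose_Nottingham[OF character_hom assms m] by blast
  have "\<chi> h = 0"
    using zero_above_m[OF _ h(1)] by simp
  then have "\<chi> (Ej m oo u) = \<chi> (Ej m)"
    using h(2) U1_hom_range[OF character_hom Ej_in_U1[OF m]] by simp
  then have nonzero: "\<chi> (Ej m oo u) \<noteq> 0"
    using Ej_m_nonzero by simp
  have "u $ 0 = 0"
    using assms by (simp add: Nottingham_def)
  then obtain z where z: "\<chi> (Ej m oo u) = int p * z"
    using dvd_above_l_compose l_less_m Ej_in_Uj[OF m] by blast
  have "\<not> int p dvd z"
  proof
    assume "int p dvd z"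
    then have "int p ^ 2 dvd \<chi> (Ej m oo u)"
      using z by (simp add: power2_eq_square)
    then show False
      using nonzero Ej_compose_range[OF m, of u] zdvd_not_zless by fastforce
  qed
  with z that show ?thesis
    by blast
qed

lemma substitution_step:
  assumes u: "strict_substitution \<chi> u" and s: "1 \<le> s" "s < k"
    and compensated: "[int n * \<chi> (Ej k oo u) + \<chi> (Ej s ^ c oo u) = 0] (mod int p ^ 2)"
  obtains u' where "strict_substitution \<chi> u'"
    and "\<And>j. 1 \<le> j \<Longrightarrow> l \<le> j + s \<Longrightarrow>
           [\<chi> (Ej j oo u') = \<chi> (Ej j oo u) + int (j * c) * \<chi> (Ej (j + s) oo u)] (mod int p)"
    and "\<And>j. 1 \<le> j \<Longrightarrow> m \<le> j + s \<Longrightarrow>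
           \<chi> (Ej j oo u') = (\<chi> (Ej j oo u) + int (j * c) * \<chi> (Ej (j + s) oo u)) mod int p ^ 2"
proof -
  have u0: "u $ 0 = 0"
    using u by (simp add: strict_substitution_def Nottingham_def)
  obtain u' where u': "strict_substitution \<chi> u'" and
    step: "\<And>j. 1 \<le> j \<Longrightarrow> \<exists>H\<in>Uj (j + s + 1). \<chi> (Ej j oo u') =
      (\<chi> (Ej j oo u) + int (j * c) * \<chi> (Ej (j + s) oo u) + \<chi> (H oo u)) mod int p ^ 2"
    using strict_substitution_step[OF character_hom u s compensated] by blast
  show ?thesis
  proof (rule that[OF u'])
    fix j
    assume j: "1 \<le> j" "l \<le> j + s"
    obtain H where H: "H \<in> Uj (j + s + 1)" and eq: "\<chi> (Ej j oo u') =
      (\<chi> (Ej j oo u) + int (j * c) * \<chi> (Ej (j + s) oo u) + \<chi> (H oo u)) mod int p ^ 2"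
      using step[OF j(1)] by blast
    have "int p dvd \<chi> (H oo u)"
      using dvd_above_l_compose[OF u0 _ H] j(2) by simp
    then show "[\<chi> (Ej j oo u') = \<chi> (Ej j oo u) + int (j * c) * \<chi> (Ej (j + s) oo u)] (mod int p)"
      unfolding eq by (rule mod_power2_add_dvd_cong)
  next
    fix j
    assume j: "1 \<le> j" "m \<le> j + s"
    obtain H where H: "H \<in> Uj (j + s + 1)" and eq: "\<chi> (Ej j oo u') =
      (\<chi> (Ej j oo u) + int (j * c) * \<chi> (Ej (j + s) oo u) + \<chi> (H oo u)) mod int p ^ 2"
      using step[OF j(1)] by blast
    have "\<chi> (H oo u) = 0"
      using zero_above_m_compose[OF u0 _ H] j(2) by simp
    with eq show "\<chi> (Ej j oo u') = (\<chi> (Ej j oo u) + int (j * c) * \<chi> (Ej (j + s) oo u)) mod int p ^ 2"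
      by simp
  qed
qed

lemma clear_unit_coefficient:
  assumes u: "strict_substitution \<chi> u" and i: "1 \<le> i" "i < l" "\<not> p dvd i"
  obtains u' where "strict_substitution \<chi> u'" "int p dvd \<chi> (Ej i oo u')"
    and "\<And>j. i < j \<Longrightarrow> [\<chi> (Ej j oo u') = \<chi> (Ej j oo u)] (mod int p)"
proof -
  have u0: "u $ 0 = 0" and unit: "\<not> int p dvd \<chi> (Ej l oo u)"
    using u Ej_l_compose_not_dvd by (auto simp: strict_substitution_def Nottingham_def)
  define s where "s = l - i"
  have s: "1 \<le> s" "s < l" "i + s = l"
    using i by (auto simp: s_def)
  have "\<not> int p dvd int i * \<chi> (Ej l oo u)"
    using unit i(3) prime by (simp add: prime_dvd_mult_iff)
  then obtain c :: nat where c: "[int c * (int i * \<chi> (Ej l oo u)) + \<chi> (Ej i oo u) = 0] (mod int p)"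
    using prime_linear_cong_solvable[of "int p", where k = 1] prime by auto
  obtain n :: nat where "[int n * \<chi> (Ej l oo u) + \<chi> (Ej s ^ c oo u) = 0] (mod int p ^ 2)"
    using prime_linear_cong_solvable[OF _ unit, where k = 2] prime by auto
  from substitution_step[OF u s(1,2) this] obtain u' where u': "strict_substitution \<chi> u'"
    and shift: "\<And>j. 1 \<le> j \<Longrightarrow> l \<le> j + s \<Longrightarrow>
      [\<chi> (Ej j oo u') = \<chi> (Ej j oo u) + int (j * c) * \<chi> (Ej (j + s) oo u)] (mod int p)"
    by blast
  have "[\<chi> (Ej i oo u') = int c * (int i * \<chi> (Ej l oo u)) + \<chi> (Ej i oo u)] (mod int p)"
    using shift[OF i(1)] s(3) by (simp add: algebra_simps)
  from cong_trans[OF this c] have "int p dvd \<chi> (Ej i oo u')"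
    by (simp add: cong_0_iff)
  moreover have "[\<chi> (Ej j oo u') = \<chi> (Ej j oo u)] (mod int p)" if "i < j" for j
    using cong_trans[OF shift[of j] cong_add_mult_dvd[OF dvd_above_l_compose[OF u0 _ Ej_in_Uj]]]
      that i(1) s(3) by simp
  ultimately show ?thesis
    using that u' by blast
qed

lemma Ej_m_compensation:
  assumes "u \<in> Nottingham" "l < s"
  obtains n :: nat where "[int n * \<chi> (Ej m oo u) + \<chi> (Ej s ^ c oo u) = 0] (mod int p ^ 2)"
proof -
  obtain z where z: "\<chi> (Ej m oo u) = int p * z" "\<not> int p dvd z"
    using Ej_m_compose_p_times_unit[OF assms(1)] by blast
  have "Ej s ^ c \<in> Uj s"
    using assms(2) by (intro Uj_power Ej_in_Uj) simp_all
  moreover have "u $ 0 = 0"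
    using assms(1) by (simp add: Nottingham_def)
  ultimately obtain w where w: "\<chi> (Ej s ^ c oo u) = int p * w"
    using dvd_above_l_compose assms(2) by blast
  obtain n :: nat where "[int n * z + w = 0] (mod int p)"
    using prime_linear_cong_solvable[OF _ z(2), where k = 1 and b = w] prime by auto
  moreover have "int n * \<chi> (Ej m oo u) + \<chi> (Ej s ^ c oo u) = int p * (int n * z + w)"
    by (simp add: z(1) w algebra_simps)
  ultimately have "[int n * \<chi> (Ej m oo u) + \<chi> (Ej s ^ c oo u) = 0] (mod int p ^ 2)"
    by (simp add: cong_0_iff power2_eq_square)
  then show ?thesis
    by (rule that)
qed

lemma clear_p_coefficient:
  assumes u: "strict_substitution \<chi> u" and i: "1 \<le> i" "i < m - l" "\<not> p dvd i"
  obtains u' where "strict_substitution \<chi> u'" "\<chi> (Ej i oo u') < int p"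
    and "\<And>j. 1 \<le> j \<Longrightarrow> [\<chi> (Ej j oo u') = \<chi> (Ej j oo u)] (mod int p)"
    and "\<And>j. i < j \<Longrightarrow> \<chi> (Ej j oo u') = \<chi> (Ej j oo u)"
proof -
  have uN: "u \<in> Nottingham" and u0: "u $ 0 = 0"
    using u by (auto simp: strict_substitution_def Nottingham_def)
  define s where "s = m - i"
  have s: "1 \<le> s" "l < s" "s < m" "i + s = m"
    using i by (auto simp: s_def)
  obtain z where z: "\<chi> (Ej m oo u) = int p * z" "\<not> int p dvd z"
    using Ej_m_compose_p_times_unit[OF uN] by blast
  have "\<not> int p dvd int i * z"
    using z(2) i(3) prime by (simp add: prime_dvd_mult_iff)
  then obtain c :: nat where c: "[int c * (int i * z) + \<chi> (Ej i oo u) div int p = 0] (mod int p)"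
    using prime_linear_cong_solvable[of "int p", where k = 1] prime by auto
  obtain n where "[int n * \<chi> (Ej m oo u) + \<chi> (Ej s ^ c oo u) = 0] (mod int p ^ 2)"
    using Ej_m_compensation[OF uN s(2)] by blast
  from substitution_step[OF u s(1,3) this] obtain u' where u': "strict_substitution \<chi> u'"
    and shift_mod_p: "\<And>j. 1 \<le> j \<Longrightarrow> l \<le> j + s \<Longrightarrow>
      [\<chi> (Ej j oo u') = \<chi> (Ej j oo u) + int (j * c) * \<chi> (Ej (j + s) oo u)] (mod int p)"
    and shift: "\<And>j. 1 \<le> j \<Longrightarrow> m \<le> j + s \<Longrightarrow>
      \<chi> (Ej j oo u') = (\<chi> (Ej j oo u) + int (j * c) * \<chi> (Ej (j + s) oo u)) mod int p ^ 2"
    by blast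
  have "\<chi> (Ej i oo u') = (\<chi> (Ej i oo u) + int p * (int c * (int i * z))) mod int p ^ 2"
    using shift[OF i(1)] s(4) z(1) by (simp add: algebra_simps)
  also have "\<dots> = \<chi> (Ej i oo u) mod int p"
    using p_pos c by (rule mod_power2_add_mult_eq_mod)
  finally have "\<chi> (Ej i oo u') < int p"
    using p_pos by simp
  moreover have "[\<chi> (Ej j oo u') = \<chi> (Ej j oo u)] (mod int p)" if "1 \<le> j" for j
    using cong_trans[OF shift_mod_p[OF that] cong_add_mult_dvd[OF dvd_above_l_compose[OF u0 _ Ej_in_Uj]]]
      that s(2) by simp
  moreover have "\<chi> (Ej j oo u') = \<chi> (Ej j oo u)" if "i < j" for j
    using shift[of j] zero_above_m_compose[OF u0 _ Ej_in_Uj, of "j + s"] Ej_compose_range[of j u]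
      that i(1) s(4) by simp
  ultimately show ?thesis
    using that u' by blast
qed

lemma exists_substitution_clearing_unit_coefficients:
  "\<exists>u. strict_substitution \<chi> u \<and>
     (\<forall>j. 1 \<le> j \<and> j < l \<longrightarrow> \<not> p dvd j \<longrightarrow> int p dvd \<chi> (Ej j oo u))"
proof (rule exists_descending_adjustment[where P = "strict_substitution \<chi>"
      and Q = "\<lambda>u j. \<not> p dvd j \<longrightarrow> int p dvd \<chi> (Ej j oo u)"])
  show "strict_substitution \<chi> fps_X"
    by (rule strict_substitution_X[OF character_hom])
next
  fix u i
  assume u: "strict_substitution \<chi> u" and i: "1 \<le> i" "i < l"
  show "\<exists>u'. strict_substitution \<chi> u' \<and> (\<not> p dvd i \<longrightarrow> int p dvd \<chi> (Ej i oo u')) \<and>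
      (\<forall>j. i < j \<and> j < l \<and> (\<not> p dvd j \<longrightarrow> int p dvd \<chi> (Ej j oo u)) \<longrightarrow>
        (\<not> p dvd j \<longrightarrow> int p dvd \<chi> (Ej j oo u')))"
  proof (cases "p dvd i")
    case True
    with u show ?thesis by blast
  next
    case False
    with u i obtain u' where "strict_substitution \<chi> u'" "int p dvd \<chi> (Ej i oo u')"
      "\<And>j. i < j \<Longrightarrow> [\<chi> (Ej j oo u') = \<chi> (Ej j oo u)] (mod int p)"
      by (metis clear_unit_coefficient)
    then show ?thesis
      using cong_dvd_iff by blast
  qed
qed

lemma exists_substitution_clearing_coefficients:
  "\<exists>u. strict_substitution \<chi> u \<and>
     (\<forall>j. 1 \<le> j \<and> j < l \<longrightarrow> \<not> p dvd j \<longrightarrow> int p dvd \<chi> (Ej j oo u)) \<and>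
     (\<forall>j. 1 \<le> j \<and> j < m - l \<longrightarrow> \<not> p dvd j \<longrightarrow> \<chi> (Ej j oo u) < int p)"
proof -
  let ?units_cleared = "\<lambda>u. strict_substitution \<chi> u \<and>
     (\<forall>j. 1 \<le> j \<and> j < l \<longrightarrow> \<not> p dvd j \<longrightarrow> int p dvd \<chi> (Ej j oo u))"
  let ?small = "\<lambda>u j. \<not> p dvd j \<longrightarrow> \<chi> (Ej j oo u) < int p"
  obtain u\<^sub>0 where "?units_cleared u\<^sub>0"
    using exists_substitution_clearing_unit_coefficients by blast
  then have "\<exists>u. ?units_cleared u \<and> (\<forall>j. 1 \<le> j \<and> j < m - l \<longrightarrow> ?small u j)"
  proof (rule exists_descending_adjustment[where P = ?units_cleared and Q = ?small])
    fix u i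
    assume u: "?units_cleared u" and i: "1 \<le> i" "i < m - l"
    show "\<exists>u'. ?units_cleared u' \<and> ?small u' i \<and>
        (\<forall>j. i < j \<and> j < m - l \<and> ?small u j \<longrightarrow> ?small u' j)"
    proof (cases "p dvd i")
      case True
      with u show ?thesis by blast
    next
      case False
      with u i obtain u' where "strict_substitution \<chi> u'" "\<chi> (Ej i oo u') < int p"
        "\<And>j. 1 \<le> j \<Longrightarrow> [\<chi> (Ej j oo u') = \<chi> (Ej j oo u)] (mod int p)"
        "\<And>j. i < j \<Longrightarrow> \<chi> (Ej j oo u') = \<chi> (Ej j oo u)"
        by (metis clear_p_coefficient)
      with u show ?thesis
        using cong_dvd_iff by (metis (no_types, lifting))
    qed
  qed
  then show ?thesis
    by blast
qed

lemma Ej_compose_dvd_unless_l: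
  assumes "u $ 0 = 0"
    and below_l: "\<forall>j. 1 \<le> j \<and> j < l \<longrightarrow> \<not> p dvd j \<longrightarrow> int p dvd \<chi> (Ej j oo u)"
    and "1 \<le> i" "\<not> p dvd i" "i \<noteq> l"
  shows "int p dvd \<chi> (Ej i oo u)"
proof (cases "i < l")
  case True
  then show ?thesis
    using below_l assms(3,4) by blast
next
  case False
  then show ?thesis
    using dvd_above_l_compose[OF assms(1) _ Ej_in_Uj] assms(3,5) by simp
qed

lemma Ej_compose_eq_reduced:
  assumes u: "strict_substitution \<chi> u"
    and below_l: "\<forall>j. 1 \<le> j \<and> j < l \<longrightarrow> \<not> p dvd j \<longrightarrow> int p dvd \<chi> (Ej j oo u)"
    and below_m_l: "\<forall>j. 1 \<le> j \<and> j < m - l \<longrightarrow> \<not> p dvd j \<longrightarrow> \<chi> (Ej j oo u) < int p"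
    and i: "1 \<le> i" "\<not> p dvd i"
  shows "\<chi> (Ej i oo u) = ((if i = l then \<chi> (Ej l oo u) mod int p else 0) +
      int p * (if m - l \<le> i \<and> i \<le> m then \<chi> (Ej i oo u) div int p mod int p else 0)) mod int p ^ 2"
proof -
  have u0: "u $ 0 = 0"
    using u by (simp add: strict_substitution_def Nottingham_def)
  have range: "0 \<le> \<chi> (Ej i oo u)" "\<chi> (Ej i oo u) < int p ^ 2"
    using Ej_compose_range[OF i(1)] by auto
  have dvd_off_l: "int p dvd \<chi> (Ej i oo u)" if "i \<noteq> l"
    using Ej_compose_dvd_unless_l[OF u0 below_l i that] .
  consider (above) "m < i" | (middle) "m - l \<le> i" "i \<le> m" | (below) "i < m - l"
    by linarith
  then show ?thesis
  proof cases
    case above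
    then show ?thesis
      using zero_above_m_compose[OF u0 above Ej_in_Uj] l_less_m i(1) by auto
  next
    case middle
    have "int p * (\<chi> (Ej i oo u) div int p mod int p) + \<chi> (Ej i oo u) mod int p =
        \<chi> (Ej i oo u)"
      using p_pos range by (rule two_digit_expansion)
    with middle dvd_off_l range show ?thesis
      by (cases "i = l") (simp_all add: add.commute dvd_eq_mod_eq_0)
  next
    case below
    have "\<chi> (Ej i oo u) < int p"
      using below_m_l below i by blast
    moreover have "\<not> 0 < \<chi> (Ej i oo u)" if "i \<noteq> l"
      using dvd_off_l[OF that] zdvd_not_zless \<open>\<chi> (Ej i oo u) < int p\<close> by blast
    ultimately show ?thesis
      using below range by auto
  qed
qed

lemma reduced_form_compose:
  assumes u: "strict_substitution \<chi> u"
    and below_l: "\<forall>j. 1 \<le> j \<and> j < l \<longrightarrow> \<not> p dvd j \<longrightarrow> int p dvd \<chi> (Ej j oo u)"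
    and below_m_l: "\<forall>j. 1 \<le> j \<and> j < m - l \<longrightarrow> \<not> p dvd j \<longrightarrow> \<chi> (Ej j oo u) < int p"
  shows "reduced_form p l m (\<lambda>f. \<chi> (f oo u))"
proof -
  have uN: "u \<in> Nottingham" and u0: "u $ 0 = 0"
    using u by (auto simp: strict_substitution_def Nottingham_def)
  define x where "x = \<chi> (Ej l oo u) mod int p"
  define b where "b j = \<chi> (Ej j oo u) div int p mod int p" for j
  have "0 \<le> x" "x < int p" "x \<noteq> 0"
    using Ej_l_compose_not_dvd[OF uN] p_pos by (auto simp: x_def dvd_eq_mod_eq_0)
  then have x: "x \<in> {1..<int p}"
    by simp
  have b: "\<forall>j. b j \<in> {0..<int p}"
    using p_pos by (simp add: b_def)
  have m: "1 \<le> m"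
    using l_pos l_less_m by simp
  obtain z where "\<chi> (Ej m oo u) = int p * z" "\<not> int p dvd z"
    using Ej_m_compose_p_times_unit[OF uN] by blast
  moreover have "int p * b m + \<chi> (Ej m oo u) mod int p = \<chi> (Ej m oo u)"
    unfolding b_def using p_pos Ej_compose_range[OF m] by (intro two_digit_expansion) auto
  ultimately have "b m \<noteq> 0"
    using p_pos by auto
  moreover have "\<forall>i. 1 \<le> i \<and> \<not> p dvd i \<longrightarrow> \<chi> (Ej i oo u) = ((if i = l then x else 0) +
      int p * (if m - l \<le> i \<and> i \<le> m then b i else 0)) mod int p ^ 2"
    unfolding x_def b_def using Ej_compose_eq_reduced[OF u below_l below_m_l] by blast
  ultimately show ?thesis
    unfolding reduced_form_def using is_character_compose[OF character u0] x b by blast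
qed

lemma exists_reduced_form:
  "\<exists>u. strict_substitution \<chi> u \<and> reduced_form p l m (\<lambda>f. \<chi> (f oo u))"
  using exists_substitution_clearing_coefficients reduced_form_compose by blast

end

theorem theorem1p1:
  fixes p :: nat and \<chi> :: "'a::{field,finite} fps \<Rightarrow> int" and l m :: nat
  assumes "prime p" and "card (UNIV :: 'a set) = p"
    and "surjective_character p \<chi>"
    and "has_type p \<chi> l m"
  shows "\<exists>\<psi>. strictly_equiv \<chi> \<psi> \<and> reduced_form p l m \<psi>"
proof -
  have \<chi>: "is_character p \<chi>"
    using assms(3) by (simp add: surjective_character_def)
  then have hom: "U1_hom p \<chi>"
    by (rule is_character_imp_U1_hom)
  interpret character_of_type p \<chi> l m
  proof
    show "l < m"
      by (rule has_type_l_less_m[OF assms(1,2) hom assms(4)])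
    show "\<not> int p dvd \<chi> (Ej l)"
      by (rule has_type_Ej_l_not_dvd[OF assms(1,2) hom assms(4)])
    show "\<chi> (Ej m) \<noteq> 0"
      by (rule has_type_Ej_m_nonzero[OF assms(1,2) hom assms(4)])
  qed (use assms(1,4) \<chi> in \<open>auto simp: has_type_def\<close>)
  obtain u where "strict_substitution \<chi> u" "reduced_form p l m (\<lambda>f. \<chi> (f oo u))"
    using exists_reduced_form by blast
  then show ?thesis
    using strictly_equiv_compose by blast
qed

end
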